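(* Let $(X,\preceq,\{H_n\})$ be a half-space order and let a group $G$ act on $X$ by quasi-automorphisms of defect bounded by $d$. For $a\in X$ define $f_a:G\to\mathbb{Z}$ by $f_a(g):=h(ga,a)$. Then each $f_a$ is a quasimorphism of defect at most $d$, and $|f_a(g)-f_b(g)|\leq d$ for all $a,b\in X$ and $g\in G$.
   Context: A half-space filtration of a set $X$ is a family $\{H_n\}_{n\in\mathbb{Z}}$ of subsets with $H_{n+1}\subsetneq H_n$, $\bigcap H_n=\emptyset$, $\bigcup H_n=X$. The height of $a\in X$ is $h(a)=\sup\{n\in\mathbb{Z}: a\in H_n\}$, and $h(a,b)=h(a)-h(b)$. $(X,\preceq,\{H_n\})$ is a half-space order if $(X,\preceq)$ is a poset, $\{H_n\}$ is a half-space filtration, and for some constant $w$, $h(a,b)\geq w\Rightarrow a\succeq b$. A group acting on $X$ (by bijections, not necessarily order-preserving) acts by quasi-automorphisms of defect bounded by $d$ if $|h(ga,gb)-h(a,b)|\leq d$ for all $g\in G$, $a,b\in X$. The defect of $f:G\to\mathbb{R}$ is $\sup_{g,k}|f(gk)-f(g)-f(k)|$. *)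

theory Defs
  imports Complex_Main "HOL-Algebra.Group_Action"
begin

text \<open>The set X is modelled as the universe of a type 'x.\<close>

definition half_space_filtration :: "(int \<Rightarrow> 'x set) \<Rightarrow> bool" where
  "half_space_filtration H \<longleftrightarrow>
     (\<forall>n. H (n + 1) \<subset> H n) \<and> \<Inter>(range H) = {} \<and> \<Union>(range H) = UNIV"

definition height :: "(int \<Rightarrow> 'x set) \<Rightarrow> 'x \<Rightarrow> int" where
  "height H a = Sup {n. a \<in> H n}"

definition height2 :: "(int \<Rightarrow> 'x set) \<Rightarrow> 'x \<Rightarrow> 'x \<Rightarrow> int" where
  "height2 H a b = height H a - height H b"

definition half_space_order :: "'x rel \<Rightarrow> (int \<Rightarrow> 'x set) \<Rightarrow> bool" where
  "half_space_order R H \<longleftrightarrow>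
     partial_order_on UNIV R \<and> half_space_filtration H \<and>
     (\<exists>w::int. \<forall>a b. height2 H a b \<ge> w \<longrightarrow> (b, a) \<in> R)"

definition quasi_aut_action ::
  "('g, 'm) monoid_scheme \<Rightarrow> ('g \<Rightarrow> 'x \<Rightarrow> 'x) \<Rightarrow> (int \<Rightarrow> 'x set) \<Rightarrow> real \<Rightarrow> bool" where
  "quasi_aut_action G \<phi> H d \<longleftrightarrow>
     (\<forall>g\<in>carrier G. \<forall>a b. \<bar>real_of_int (height2 H (\<phi> g a) (\<phi> g b) - height2 H a b)\<bar> \<le> d)"

definition quasimorphism_defect_le ::
  "('g, 'm) monoid_scheme \<Rightarrow> ('g \<Rightarrow> real) \<Rightarrow> real \<Rightarrow> bool" where
  "quasimorphism_defect_le G f d \<longleftrightarrow>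
     (\<forall>g\<in>carrier G. \<forall>k\<in>carrier G. \<bar>f (g \<otimes>\<^bsub>G\<^esub> k) - f g - f k\<bar> \<le> d)"

end

theory Submission
  imports Defs
begin

text \<open>Since height2 is a difference of heights, f_a(gk) - f_a(g) - f_a(k) equals
  h(g(ka), ga) - h(ka, a) and f_a(g) - f_b(g) equals h(ga, gb) - h(a, b); both are bounded
  by the defect of the action.\<close>

lemma height2_cocycle: "height2 H a c = height2 H a b + height2 H b c"
  unfolding height2_def by simp

lemma quasi_aut_actionD:
  "quasi_aut_action G \<phi> H d \<Longrightarrow> g \<in> carrier G \<Longrightarrow>
     \<bar>real_of_int (height2 H (\<phi> g a) (\<phi> g b) - height2 H a b)\<bar> \<le> d"
  unfolding quasi_aut_action_def by blast

lemma orbit_height_quasimorphism: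
  assumes action: "group_action G UNIV \<phi>" and qa: "quasi_aut_action G \<phi> H d"
  shows "quasimorphism_defect_le G (\<lambda>g. real_of_int (height2 H (\<phi> g a) a)) d"
  unfolding quasimorphism_defect_le_def
proof (intro ballI)
  fix g k assume g: "g \<in> carrier G" and k: "k \<in> carrier G"
  have "\<phi> (g \<otimes>\<^bsub>G\<^esub> k) a = \<phi> g (\<phi> k a)"
    using group_action.composition_rule[OF action] g k by simp
  then have "height2 H (\<phi> (g \<otimes>\<^bsub>G\<^esub> k) a) a - height2 H (\<phi> g a) a - height2 H (\<phi> k a) a
      = height2 H (\<phi> g (\<phi> k a)) (\<phi> g a) - height2 H (\<phi> k a) a"
    using height2_cocycle[of H "\<phi> g (\<phi> k a)" a "\<phi> g a"] by simp
  with quasi_aut_actionD[OF qa g, of "\<phi> k a" a]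
  show "\<bar>real_of_int (height2 H (\<phi> (g \<otimes>\<^bsub>G\<^esub> k) a) a) - real_of_int (height2 H (\<phi> g a) a)
          - real_of_int (height2 H (\<phi> k a) a)\<bar> \<le> d"
    by (metis of_int_diff)
qed

lemma orbit_height_basepoint_change:
  assumes qa: "quasi_aut_action G \<phi> H d" and g: "g \<in> carrier G"
  shows "\<bar>real_of_int (height2 H (\<phi> g a) a) - real_of_int (height2 H (\<phi> g b) b)\<bar> \<le> d"
proof -
  have "height2 H (\<phi> g a) a - height2 H (\<phi> g b) b = height2 H (\<phi> g a) (\<phi> g b) - height2 H a b"
    unfolding height2_def by simp
  with quasi_aut_actionD[OF qa g, of a b] show ?thesis
    by (metis of_int_diff)
qed

theorem proposition2p1:
  fixes G :: "('g, 'm) monoid_scheme" and \<phi> :: "'g \<Rightarrow> 'x \<Rightarrow> 'x"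
    and R :: "'x rel" and H :: "int \<Rightarrow> 'x set" and d :: real
  assumes "half_space_order R H"
    and "group_action G UNIV \<phi>"
    and "quasi_aut_action G \<phi> H d"
  shows "(\<forall>a. quasimorphism_defect_le G (\<lambda>g. real_of_int (height2 H (\<phi> g a) a)) d)
       \<and> (\<forall>a b. \<forall>g\<in>carrier G.
            \<bar>real_of_int (height2 H (\<phi> g a) a) - real_of_int (height2 H (\<phi> g b) b)\<bar> \<le> d)"
  using orbit_height_quasimorphism[OF assms(2,3)] orbit_height_basepoint_change[OF assms(3)]
  by blast

end
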